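(* Let $m,n\in\mathbb{Z}\setminus\{0\}$ and let $(\bar\varphi,D)$ be the graph of groups correspondence over $B=C(\mathbb{T})\oplus C(\mathbb{T})$ of the loop of groups with one vertex, edges $e,\bar e$, all groups $\mathbb{Z}$, $\alpha_e(k)=nk$, $\alpha_{\bar e}(k)=mk$; as a right module $D=C(\mathbb{T})^{|n|}\oplus C(\mathbb{T})^{|m|}\oplus C(\mathbb{T})^{|n|-1}\oplus C(\mathbb{T})^{|m|-1}$ (with $C(\mathbb{T})^0=\{0\}$). Let $(\bar\varphi^{op},D^{*op})$ be the conjugate correspondence. Then $D\cong D^{*op}$ as $B$–$B$-correspondences, where one uses $C(\mathbb{T})^{op}=C(\mathbb{T})\cong\overline{C(\mathbb{T})}$.
   Context: For the loop of groups, $\Sigma_e$ is a transversal of $\mathbb{Z}/n\mathbb{Z}$ in $\mathbb{Z}$ and $\Sigma_{\bar e}$ of $\mathbb{Z}/m\mathbb{Z}$, both containing $0$; $g\cdot\mu$ is the representative of $g+\mu$, $c_e(g,\mu)=(g+\mu-g\cdot\mu)/n$, $c_{\bar e}(g,\mu)=(g+\mu-g\cdot\mu)/m$. Paths of length two: $ee,e\bar e,\bar ee,\bar e\bar e$. With $B_e=B_{\bar e}=C^*(\mathbb{Z})\cong C(\mathbb{T})$, $D_{fx}=\bigoplus_{\mu\in\Sigma_x\setminus\Delta_{fx}}C^*(\mathbb{Z})$ ($\Delta_{fx}=\{0\}$ if $f=\bar x$, else $\emptyset$) with right action in the $B_x$ summand and left $B_f$-action $(\bar\varphi_{fx}(a)\xi)(\mu,h)=\sum_{k\in\mathbb{Z}}a(-k)\xi(\alpha_{\bar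 f}(k)\cdot\mu,c_x(\alpha_{\bar f}(k),\mu)+h)$; $D=\bigoplus D_{fx}$, $\bar\varphi=\bigoplus\bar\varphi_{fx}$. For an $A$–$B$-correspondence $(\phi,X)$, the conjugate space $X^*=\{\flat(x):x\in X\}$ ($\flat$ antilinear) is an $A^{op}$–$B^{op}$-correspondence with $\phi^{op}(a^{op})\flat(x)b^{op}=\flat(\phi(a^* )xb^* )$ and the $B^{op}$-valued inner product obtained from the left $B$-valued inner product of $X^*$; this is $(\phi^{op},X^{*op})$. *)

theory Defs
  imports "HOL-Analysis.Analysis" "HOL-Number_Theory.Cong"
begin

section \<open>The loop of groups: one vertex, edges e and ebar, all groups Z\<close>

datatype edge = E | Ebar

fun bar :: "edge \<Rightarrow> edge" where
  "bar E = Ebar" | "bar Ebar = E"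

fun idx :: "int \<Rightarrow> int \<Rightarrow> edge \<Rightarrow> int" where
  "idx m n E = n" | "idx m n Ebar = m"

definition alpha :: "int \<Rightarrow> int \<Rightarrow> edge \<Rightarrow> int \<Rightarrow> int" where
  "alpha m n x k = idx m n x * k"

definition transversal :: "int \<Rightarrow> int set \<Rightarrow> bool" where
  "transversal N S \<longleftrightarrow> 0 \<in> S \<and> (\<forall>r. \<exists>!s. s \<in> S \<and> [s = r] (mod N))"

definition gact :: "int \<Rightarrow> int set \<Rightarrow> int \<Rightarrow> int \<Rightarrow> int" where
  "gact N S g \<mu> = (THE s. s \<in> S \<and> [s = g + \<mu>] (mod N))"

definition cocyc :: "int \<Rightarrow> int set \<Rightarrow> int \<Rightarrow> int \<Rightarrow> int" where
  "cocyc N S g \<mu> = (g + \<mu> - gact N S g \<mu>) div N"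

section \<open>C*(Z), realised as Fourier coefficient sequences of elements of C(T)\<close>

text \<open>C(T) = continuous 1-periodic functions R -> C; delta_k corresponds to z^k\<close>
definition fcoef :: "(real \<Rightarrow> complex) \<Rightarrow> int \<Rightarrow> complex" where
  "fcoef f k = integral {0..1} (\<lambda>t. f t * exp (- 2 * pi * \<i> * of_int k * of_real t))"

definition cstarZ :: "(int \<Rightarrow> complex) set" where
  "cstarZ = {fcoef f | f. continuous_on UNIV f \<and> (\<forall>t. f (t + 1) = f t)}"

definition conv :: "(int \<Rightarrow> complex) \<Rightarrow> (int \<Rightarrow> complex) \<Rightarrow> int \<Rightarrow> complex" where
  "conv a b k = (\<Sum>\<^sub>\<infinity>j\<in>UNIV. a j * b (k - j))"

definition zstar :: "(int \<Rightarrow> complex) \<Rightarrow> int \<Rightarrow> complex" where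
  "zstar a k = cnj (a (- k))"

type_synonym belt = "edge \<Rightarrow> int \<Rightarrow> complex"

definition Bcar :: "belt set" where
  "Bcar = {b. \<forall>x. b x \<in> cstarZ}"

definition Bstar :: "belt \<Rightarrow> belt" where
  "Bstar b = (\<lambda>x. zstar (b x))"

record 'v corr =
  vcar :: "'v set"
  vadd :: "'v \<Rightarrow> 'v \<Rightarrow> 'v"
  vsmult :: "complex \<Rightarrow> 'v \<Rightarrow> 'v"
  rmul :: "'v \<Rightarrow> belt \<Rightarrow> 'v"
  lmul :: "belt \<Rightarrow> 'v \<Rightarrow> 'v"
  ip :: "'v \<Rightarrow> 'v \<Rightarrow> belt"

text \<open>Conjugate correspondence (phi^op, X^{*op}), with flat taken as the identity on
  the underlying set and B^op = B (B is commutative):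
  lambda flat(x) = flat(conj lambda x), flat(x) b = flat(x b^*), a flat(x) = flat(phi(a^*) x),
  <flat x, flat y> = (left inner product <flat y, flat x>)^op = <y, x>_B.\<close>
definition conj_op :: "'v corr \<Rightarrow> 'v corr" where
  "conj_op X = \<lparr> vcar = vcar X, vadd = vadd X,
     vsmult = (\<lambda>c v. vsmult X (cnj c) v),
     rmul = (\<lambda>v b. rmul X v (Bstar b)),
     lmul = (\<lambda>a v. lmul X (Bstar a) v),
     ip = (\<lambda>v w. ip X w v) \<rparr>"

definition corr_iso :: "'v corr \<Rightarrow> 'w corr \<Rightarrow> bool" where
  "corr_iso X Y \<longleftrightarrow> (\<exists>U. bij_betw U (vcar X) (vcar Y) \<and>
     (\<forall>v\<in>vcar X. \<forall>w\<in>vcar X. U (vadd X v w) = vadd Y (U v) (U w)) \<and>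
     (\<forall>c. \<forall>v\<in>vcar X. U (vsmult X c v) = vsmult Y c (U v)) \<and>
     (\<forall>b\<in>Bcar. \<forall>v\<in>vcar X. U (rmul X v b) = rmul Y (U v) b) \<and>
     (\<forall>a\<in>Bcar. \<forall>v\<in>vcar X. U (lmul X a v) = lmul Y a (U v)) \<and>
     (\<forall>v\<in>vcar X. \<forall>w\<in>vcar X. ip Y (U v) (U w) = ip X v w))"

text \<open>Elements: xi (f,x) mu h = h-th coefficient of the mu-component of the D_{fx} part,
  mu ranging over Sigma_x minus Delta_{fx}.\<close>
type_synonym delt = "edge \<times> edge \<Rightarrow> int \<Rightarrow> int \<Rightarrow> complex"

definition Dind :: "(edge \<Rightarrow> int set) \<Rightarrow> edge \<Rightarrow> edge \<Rightarrow> int set" where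
  "Dind \<Sigma> f x = \<Sigma> x - (if f = bar x then {0} else {})"

definition Dcar :: "(edge \<Rightarrow> int set) \<Rightarrow> delt set" where
  "Dcar \<Sigma> = {\<xi>. \<forall>f x \<mu>. (\<mu> \<in> Dind \<Sigma> f x \<longrightarrow> \<xi> (f, x) \<mu> \<in> cstarZ)
                        \<and> (\<mu> \<notin> Dind \<Sigma> f x \<longrightarrow> \<xi> (f, x) \<mu> = (\<lambda>_. 0))}"

definition Dcorr :: "int \<Rightarrow> int \<Rightarrow> (edge \<Rightarrow> int set) \<Rightarrow> delt corr" where
  "Dcorr m n \<Sigma> = \<lparr> vcar = Dcar \<Sigma>,
     vadd = (\<lambda>\<xi> \<eta> p \<mu> h. \<xi> p \<mu> h + \<eta> p \<mu> h),
     vsmult = (\<lambda>c \<xi> p \<mu> h. c * \<xi> p \<mu> h),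
     rmul = (\<lambda>\<xi> b (f, x) \<mu>. conv (\<xi> (f, x) \<mu>) (b x)),
     lmul = (\<lambda>a \<xi> (f, x) \<mu> h.
        if \<mu> \<in> Dind \<Sigma> f x then
          (\<Sum>\<^sub>\<infinity>k\<in>UNIV. a f (- k) *
             \<xi> (f, x) (gact (idx m n x) (\<Sigma> x) (alpha m n (bar f) k) \<mu>)
                      (cocyc (idx m n x) (\<Sigma> x) (alpha m n (bar f) k) \<mu> + h))
        else 0),
     ip = (\<lambda>\<xi> \<eta> x. (\<lambda>h. \<Sum>f\<in>{E, Ebar}. \<Sum>\<mu>\<in>Dind \<Sigma> f x.
             conv (zstar (\<xi> (f, x) \<mu>)) (\<eta> (f, x) \<mu>) h)) \<rparr>"

end

theory Submission
  imports Defs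
begin

text \<open>For a transversal Sigma of Z/NZ let sigma(mu) be the representative of -mu and
  tau(mu) = (sigma(mu) + mu)/N. Then sigma is an involution of Sigma fixing 0, so it permutes
  every index set Sigma_x - Delta_fx; it turns the action of -g into that of g, and
  tau((-g).mu) + c(-g, mu) = tau(mu) - c(g, sigma(mu)). The unitary D -> D^*op sends the
  mu-coordinate of xi to z^(-tau(mu)) conj(xi_sigma(mu)). Complex conjugation turns the right
  action of b into that of b^*; the identity above, after substituting k -> -k, turns the left
  action of a into that of a^*; and reindexing the sum over mu by sigma swaps the arguments of
  the inner product, as the inner product of D^*op requires.\<close>

definition rep :: "int \<Rightarrow> int set \<Rightarrow> int \<Rightarrow> int" where
  "rep N S r = (THE s. s \<in> S \<and> [s = r] (mod N))"

definition rep_neg :: "int \<Rightarrow> int set \<Rightarrow> int \<Rightarrow> int" where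
  "rep_neg N S \<mu> = rep N S (- \<mu>)"

definition rep_neg_quot :: "int \<Rightarrow> int set \<Rightarrow> int \<Rightarrow> int" where
  "rep_neg_quot N S \<mu> = (rep_neg N S \<mu> + \<mu>) div N"

lemma gact_eq_rep: "gact N S g \<mu> = rep N S (g + \<mu>)"
  unfolding gact_def rep_def ..

lemma rep_unique:
  assumes "transversal N S" "s \<in> S" "[s = r] (mod N)"
  shows "rep N S r = s"
  unfolding rep_def using assms unfolding transversal_def by (blast intro: the1_equality)

lemma
  assumes "transversal N S"
  shows rep_in: "rep N S r \<in> S" and rep_cong: "[rep N S r = r] (mod N)"
proof -
  have "\<exists>!s. s \<in> S \<and> [s = r] (mod N)"
    using assms unfolding transversal_def by blast
  from theI'[OF this] show "rep N S r \<in> S" "[rep N S r = r] (mod N)"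
    unfolding rep_def by blast+
qed

lemma rep_of_mem: "transversal N S \<Longrightarrow> \<mu> \<in> S \<Longrightarrow> rep N S \<mu> = \<mu>"
  by (rule rep_unique) simp_all

lemma rep_cong_eq: "transversal N S \<Longrightarrow> [r = r'] (mod N) \<Longrightarrow> rep N S r = rep N S r'"
  by (metis rep_cong rep_in rep_unique cong_trans)

lemma rep_uminus_rep: "transversal N S \<Longrightarrow> rep N S (- rep N S r) = rep N S (- r)"
  by (rule rep_cong_eq) (simp_all add: cong_minus_minus_iff rep_cong)

lemma rep_add_rep: "transversal N S \<Longrightarrow> rep N S (g + rep N S r) = rep N S (g + r)"
  by (rule rep_cong_eq) (simp_all add: cong_add rep_cong)

lemma mult_cocyc: "transversal N S \<Longrightarrow> N * cocyc N S g \<mu> = g + \<mu> - gact N S g \<mu>"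
  unfolding cocyc_def gact_eq_rep
  by (rule dvd_mult_div_cancel) (metis rep_cong cong_sym cong_iff_dvd_diff)

lemma rep_neg_in: "transversal N S \<Longrightarrow> rep_neg N S \<mu> \<in> S"
  unfolding rep_neg_def by (rule rep_in)

lemma rep_neg_rep_neg: "transversal N S \<Longrightarrow> \<mu> \<in> S \<Longrightarrow> rep_neg N S (rep_neg N S \<mu>) = \<mu>"
  unfolding rep_neg_def by (simp add: rep_uminus_rep rep_of_mem)

lemma rep_neg_zero:
  assumes "transversal N S"
  shows "rep_neg N S 0 = 0"
proof -
  have "0 \<in> S" using assms unfolding transversal_def ..
  with assms show ?thesis unfolding rep_neg_def by (simp add: rep_of_mem)
qed

lemma mult_rep_neg_quot: "transversal N S \<Longrightarrow> N * rep_neg_quot N S \<mu> = rep_neg N S \<mu> + \<mu>"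
  unfolding rep_neg_quot_def rep_neg_def
  by (rule dvd_mult_div_cancel) (metis rep_cong cong_iff_dvd_diff diff_minus_eq_add)

lemma rep_neg_quot_rep_neg:
  "transversal N S \<Longrightarrow> \<mu> \<in> S \<Longrightarrow> rep_neg_quot N S (rep_neg N S \<mu>) = rep_neg_quot N S \<mu>"
  unfolding rep_neg_quot_def by (simp add: rep_neg_rep_neg add.commute)

lemma rep_neg_gact:
  "transversal N S \<Longrightarrow> rep_neg N S (gact N S (- g) \<mu>) = gact N S g (rep_neg N S \<mu>)"
  unfolding rep_neg_def gact_eq_rep by (simp add: rep_uminus_rep rep_add_rep)

lemma rep_neg_quot_gact:
  assumes "transversal N S" "N \<noteq> 0"
  shows "rep_neg_quot N S (gact N S (- g) \<mu>) + cocyc N S (- g) \<mu>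
           = rep_neg_quot N S \<mu> - cocyc N S g (rep_neg N S \<mu>)"
proof -
  have "N * (rep_neg_quot N S (gact N S (- g) \<mu>) + cocyc N S (- g) \<mu>)
          = N * (rep_neg_quot N S \<mu> - cocyc N S g (rep_neg N S \<mu>))"
    using assms(1)
    by (simp add: distrib_left right_diff_distrib mult_rep_neg_quot mult_cocyc rep_neg_gact)
  with assms(2) show ?thesis by simp
qed

text \<open>Under C*(Z) = C(T), \<open>cnj_reflect c a\<close> is z^c times the complex conjugate of a.\<close>

definition cnj_reflect :: "int \<Rightarrow> (int \<Rightarrow> complex) \<Rightarrow> int \<Rightarrow> complex" where
  "cnj_reflect c a h = cnj (a (c - h))"

lemma cnj_reflect_cnj_reflect [simp]: "cnj_reflect c (cnj_reflect c a) = a"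
  unfolding cnj_reflect_def by simp

lemma cnj_reflect_zero [simp]: "cnj_reflect c (\<lambda>_. 0) = (\<lambda>_. 0)"
  unfolding cnj_reflect_def by simp

lemma exp_2pi_int_periodic:
  "exp (2 * pi * \<i> * of_int c * of_real (t + 1)) = exp (2 * pi * \<i> * of_int c * of_real t)"
proof -
  have "exp (2 * pi * \<i> * of_int c * of_real (t + 1))
          = exp (2 * pi * \<i> * of_int c * of_real t + \<i> * (of_int c * (of_real pi * 2)))"
    by (simp add: algebra_simps)
  also have "\<dots> = exp (2 * pi * \<i> * of_int c * of_real t)"
    by (rule exp_plus_2pin)
  finally show ?thesis .
qed

lemma cnj_reflect_in_cstarZ:
  assumes "a \<in> cstarZ"
  shows "cnj_reflect c a \<in> cstarZ"
proof -
  obtain f where f: "a = fcoef f" "continuous_on UNIV f" "\<forall>t. f (t + 1) = f t"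
    using assms unfolding cstarZ_def by blast
  define g where "g t = cnj (f t) * exp (2 * pi * \<i> * of_int c * of_real t)" for t
  have "continuous_on UNIV g"
    unfolding g_def by (intro continuous_intros continuous_on_cnj f(2))
  moreover have "\<forall>t. g (t + 1) = g t"
    unfolding g_def using f(3) exp_2pi_int_periodic by simp
  moreover have "cnj_reflect c a = fcoef g"
  proof
    fix h
    have pointwise: "cnj (f t * exp (- 2 * pi * \<i> * of_int (c - h) * of_real t))
                       = g t * exp (- 2 * pi * \<i> * of_int h * of_real t)" for t
      unfolding g_def by (simp add: exp_cnj mult.assoc exp_add[symmetric] algebra_simps)
    have "cnj_reflect c a h
            = integral {0..1} (\<lambda>t. cnj (f t * exp (- 2 * pi * \<i> * of_int (c - h) * of_real t)))"
      unfolding cnj_reflect_def f(1) fcoef_def by (rule integral_cnj)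
    also have "\<dots> = fcoef g h"
      unfolding fcoef_def by (intro integral_cong pointwise)
    finally show "cnj_reflect c a h = fcoef g h" .
  qed
  ultimately show ?thesis
    unfolding cstarZ_def by blast
qed

lemma cnj_reflect_conv: "cnj_reflect c (conv a b) = conv (cnj_reflect c a) (zstar b)"
proof
  fix h
  let ?F = "\<lambda>j. cnj (a j) * cnj (b (c - h - j))"
  have shift: "bij_betw (\<lambda>i. c - i) UNIV (UNIV :: int set)"
    by (rule bij_betw_byWitness[where f' = "\<lambda>i. c - i"]) auto
  have "cnj_reflect c (conv a b) h = (\<Sum>\<^sub>\<infinity>j\<in>UNIV. ?F j)"
    unfolding cnj_reflect_def conv_def by (simp flip: infsum_cnj)
  also have "\<dots> = (\<Sum>\<^sub>\<infinity>i\<in>UNIV. ?F (c - i))"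
    by (rule infsum_reindex_bij_betw[OF shift, symmetric])
  also have "\<dots> = conv (cnj_reflect c a) (zstar b) h"
    unfolding cnj_reflect_def conv_def zstar_def by (simp add: algebra_simps)
  finally show "cnj_reflect c (conv a b) h = conv (cnj_reflect c a) (zstar b) h" .
qed

lemma conv_zstar_cnj_reflect: "conv (zstar (cnj_reflect c a)) (cnj_reflect c b) = conv (zstar b) a"
proof
  fix h
  let ?F = "\<lambda>i. cnj (b (- i)) * a (h - i)"
  have shift: "bij_betw (\<lambda>j. h - c - j) UNIV (UNIV :: int set)"
    by (rule bij_betw_byWitness[where f' = "\<lambda>i. h - c - i"]) auto
  have "conv (zstar (cnj_reflect c a)) (cnj_reflect c b) h = (\<Sum>\<^sub>\<infinity>j\<in>UNIV. ?F (h - c - j))"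
    unfolding cnj_reflect_def conv_def zstar_def by (intro infsum_cong) (simp add: algebra_simps)
  also have "\<dots> = (\<Sum>\<^sub>\<infinity>i\<in>UNIV. ?F i)"
    by (rule infsum_reindex_bij_betw[OF shift])
  also have "\<dots> = conv (zstar b) a h"
    unfolding conv_def zstar_def ..
  finally show "conv (zstar (cnj_reflect c a)) (cnj_reflect c b) h = conv (zstar b) a h" .
qed

lemma conv_zero_left [simp]: "conv (\<lambda>_. 0) b = (\<lambda>_. 0)"
  unfolding conv_def by simp

definition Dflip :: "int \<Rightarrow> int \<Rightarrow> (edge \<Rightarrow> int set) \<Rightarrow> delt \<Rightarrow> delt" where
  "Dflip m n \<Sigma> \<xi> = (\<lambda>(f, x) \<mu>.
     if \<mu> \<in> Dind \<Sigma> f x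
     then cnj_reflect (- rep_neg_quot (idx m n x) (\<Sigma> x) \<mu>) (\<xi> (f, x) (rep_neg (idx m n x) (\<Sigma> x) \<mu>))
     else (\<lambda>_. 0))"

lemma Dind_subset: "Dind \<Sigma> f x \<subseteq> \<Sigma> x"
  unfolding Dind_def by auto

lemma rep_neg_Dind:
  assumes tr: "transversal N (\<Sigma> x)" and \<mu>: "\<mu> \<in> Dind \<Sigma> f x"
  shows "rep_neg N (\<Sigma> x) \<mu> \<in> Dind \<Sigma> f x"
proof -
  have "\<mu> \<in> \<Sigma> x"
    using \<mu> Dind_subset by blast
  then have "rep_neg N (\<Sigma> x) \<mu> \<noteq> 0" if "\<mu> \<noteq> 0"
    using that rep_neg_rep_neg[OF tr] rep_neg_zero[OF tr] by metis
  with \<mu> rep_neg_in[OF tr] show ?thesis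
    unfolding Dind_def by auto
qed

lemma bij_betw_rep_neg_Dind:
  assumes "transversal N (\<Sigma> x)"
  shows "bij_betw (rep_neg N (\<Sigma> x)) (Dind \<Sigma> f x) (Dind \<Sigma> f x)"
  by (rule bij_betw_byWitness[where f' = "rep_neg N (\<Sigma> x)"])
     (use rep_neg_Dind[where \<Sigma> = \<Sigma>, OF assms] rep_neg_rep_neg[OF assms] Dind_subset[of \<Sigma> f x]
       in auto)

lemma Dcorr_simps [simp]:
  "vcar (Dcorr m n \<Sigma>) = Dcar \<Sigma>"
  "rmul (Dcorr m n \<Sigma>) \<xi> b (f, x) = (\<lambda>\<mu>. conv (\<xi> (f, x) \<mu>) (b x))"
  unfolding Dcorr_def by simp_all

lemma Dcar_inside: "\<xi> \<in> Dcar \<Sigma> \<Longrightarrow> \<mu> \<in> Dind \<Sigma> f x \<Longrightarrow> \<xi> (f, x) \<mu> \<in> cstarZ"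
  unfolding Dcar_def by blast

lemma Dcar_outside: "\<xi> \<in> Dcar \<Sigma> \<Longrightarrow> \<mu> \<notin> Dind \<Sigma> f x \<Longrightarrow> \<xi> (f, x) \<mu> = (\<lambda>_. 0)"
  unfolding Dcar_def by blast

lemma Dflip_apply:
  assumes tr: "transversal (idx m n x) (\<Sigma> x)" and \<xi>: "\<xi> \<in> Dcar \<Sigma>" and \<nu>: "\<nu> \<in> \<Sigma> x"
  shows "Dflip m n \<Sigma> \<xi> (f, x) \<nu>
           = cnj_reflect (- rep_neg_quot (idx m n x) (\<Sigma> x) \<nu>) (\<xi> (f, x) (rep_neg (idx m n x) (\<Sigma> x) \<nu>))"
proof (cases "\<nu> \<in> Dind \<Sigma> f x")
  case False
  with \<nu> have "\<nu> = 0" and "rep_neg (idx m n x) (\<Sigma> x) \<nu> \<notin> Dind \<Sigma> f x"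
    using rep_neg_zero[OF tr] unfolding Dind_def by (auto split: if_splits)
  with False show ?thesis
    unfolding Dflip_def by (simp add: Dcar_outside[OF \<xi>] cnj_reflect_def)
qed (simp add: Dflip_def)

lemma Dflip_in_Dcar:
  assumes tr: "\<And>x. transversal (idx m n x) (\<Sigma> x)" and \<xi>: "\<xi> \<in> Dcar \<Sigma>"
  shows "Dflip m n \<Sigma> \<xi> \<in> Dcar \<Sigma>"
  unfolding Dcar_def
proof (intro CollectI allI conjI impI)
  fix f x \<mu>
  assume "\<mu> \<in> Dind \<Sigma> f x"
  then show "Dflip m n \<Sigma> \<xi> (f, x) \<mu> \<in> cstarZ"
    by (simp add: Dflip_def cnj_reflect_in_cstarZ
                  Dcar_inside[OF \<xi> rep_neg_Dind[where \<Sigma> = \<Sigma>, OF tr]])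
qed (simp add: Dflip_def)

lemma Dflip_Dflip:
  assumes tr: "\<And>x. transversal (idx m n x) (\<Sigma> x)" and \<xi>: "\<xi> \<in> Dcar \<Sigma>"
  shows "Dflip m n \<Sigma> (Dflip m n \<Sigma> \<xi>) = \<xi>"
proof -
  have "Dflip m n \<Sigma> (Dflip m n \<Sigma> \<xi>) (f, x) \<mu> = \<xi> (f, x) \<mu>" for f x \<mu>
  proof (cases "\<mu> \<in> Dind \<Sigma> f x")
    case True
    then have "\<mu> \<in> \<Sigma> x"
      using Dind_subset by blast
    with True show ?thesis
      by (simp add: Dflip_def rep_neg_Dind[where \<Sigma> = \<Sigma>, OF tr True] rep_neg_rep_neg[OF tr]
                    rep_neg_quot_rep_neg[OF tr])
  qed (simp add: Dflip_def Dcar_outside[OF \<xi>])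
  then show ?thesis
    by (simp add: fun_eq_iff split_paired_All)
qed

lemma Dflip_vadd:
  "Dflip m n \<Sigma> (vadd (Dcorr m n \<Sigma>) \<xi> \<eta>)
     = vadd (Dcorr m n \<Sigma>) (Dflip m n \<Sigma> \<xi>) (Dflip m n \<Sigma> \<eta>)"
  unfolding Dflip_def Dcorr_def cnj_reflect_def by (auto simp: fun_eq_iff)

lemma Dflip_vsmult:
  "Dflip m n \<Sigma> (vsmult (Dcorr m n \<Sigma>) c \<xi>) = vsmult (Dcorr m n \<Sigma>) (cnj c) (Dflip m n \<Sigma> \<xi>)"
  unfolding Dflip_def Dcorr_def cnj_reflect_def by (auto simp: fun_eq_iff)

lemma Dflip_rmul:
  "Dflip m n \<Sigma> (rmul (Dcorr m n \<Sigma>) \<xi> b) = rmul (Dcorr m n \<Sigma>) (Dflip m n \<Sigma> \<xi>) (Bstar b)"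
  unfolding Dflip_def by (auto simp: fun_eq_iff Bstar_def cnj_reflect_conv)

lemma Dflip_ip:
  assumes tr: "\<And>x. transversal (idx m n x) (\<Sigma> x)"
  shows "ip (Dcorr m n \<Sigma>) (Dflip m n \<Sigma> \<eta>) (Dflip m n \<Sigma> \<xi>) = ip (Dcorr m n \<Sigma>) \<xi> \<eta>"
proof -
  have "(\<Sum>\<mu>\<in>Dind \<Sigma> f x. conv (zstar (Dflip m n \<Sigma> \<eta> (f, x) \<mu>)) (Dflip m n \<Sigma> \<xi> (f, x) \<mu>) h)
          = (\<Sum>\<mu>\<in>Dind \<Sigma> f x. conv (zstar (\<xi> (f, x) \<mu>)) (\<eta> (f, x) \<mu>) h)" for f x h
  proof -
    let ?\<sigma> = "rep_neg (idx m n x) (\<Sigma> x)"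
    let ?G = "\<lambda>\<mu>. conv (zstar (Dflip m n \<Sigma> \<eta> (f, x) \<mu>)) (Dflip m n \<Sigma> \<xi> (f, x) \<mu>) h"
    have "(\<Sum>\<mu>\<in>Dind \<Sigma> f x. ?G \<mu>) = (\<Sum>\<mu>\<in>Dind \<Sigma> f x. ?G (?\<sigma> \<mu>))"
      by (rule sum.reindex_bij_betw[OF bij_betw_rep_neg_Dind[where \<Sigma> = \<Sigma>, OF tr], symmetric])
    also have "\<dots> = (\<Sum>\<mu>\<in>Dind \<Sigma> f x. conv (zstar (\<xi> (f, x) \<mu>)) (\<eta> (f, x) \<mu>) h)"
    proof (rule sum.cong[OF refl])
      fix \<mu> assume \<mu>: "\<mu> \<in> Dind \<Sigma> f x"
      then have "\<mu> \<in> \<Sigma> x"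
        using Dind_subset by blast
      with \<mu> show "?G (?\<sigma> \<mu>) = conv (zstar (\<xi> (f, x) \<mu>)) (\<eta> (f, x) \<mu>) h"
        by (simp add: Dflip_def rep_neg_Dind[where \<Sigma> = \<Sigma>, OF tr] rep_neg_rep_neg[OF tr]
                      rep_neg_quot_rep_neg[OF tr] conv_zstar_cnj_reflect)
    qed
    finally show ?thesis .
  qed
  then show ?thesis
    unfolding Dcorr_def by simp
qed

lemma Dflip_gact:
  assumes tr: "transversal (idx m n x) (\<Sigma> x)" and nz: "idx m n x \<noteq> 0"
    and \<xi>: "\<xi> \<in> Dcar \<Sigma>" and \<mu>: "\<mu> \<in> \<Sigma> x"
  defines "N \<equiv> idx m n x" and "S \<equiv> \<Sigma> x"
  shows "Dflip m n \<Sigma> \<xi> (f, x) (gact N S (- g) \<mu>) (cocyc N S (- g) \<mu> + h)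
           = cnj (\<xi> (f, x) (gact N S g (rep_neg N S \<mu>))
                   (cocyc N S g (rep_neg N S \<mu>) + (- rep_neg_quot N S \<mu> - h)))"
proof -
  have "gact N S (- g) \<mu> \<in> S"
    unfolding gact_eq_rep N_def S_def by (rule rep_in[OF tr])
  note flip = Dflip_apply[OF tr \<xi> this[unfolded N_def S_def], folded N_def S_def]
  have "rep_neg_quot N S (gact N S (- g) \<mu>) + cocyc N S (- g) \<mu>
          = rep_neg_quot N S \<mu> - cocyc N S g (rep_neg N S \<mu>)"
    unfolding N_def S_def by (rule rep_neg_quot_gact[OF tr nz])
  then have arg: "- rep_neg_quot N S (gact N S (- g) \<mu>) - (cocyc N S (- g) \<mu> + h)
               = cocyc N S g (rep_neg N S \<mu>) + (- rep_neg_quot N S \<mu> - h)"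
    by linarith
  show ?thesis
    unfolding flip cnj_reflect_def rep_neg_gact[OF tr, folded N_def S_def] arg ..
qed

lemma Dflip_lmul:
  assumes tr: "\<And>x. transversal (idx m n x) (\<Sigma> x)" and nz: "\<And>x. idx m n x \<noteq> 0"
    and \<xi>: "\<xi> \<in> Dcar \<Sigma>"
  shows "Dflip m n \<Sigma> (lmul (Dcorr m n \<Sigma>) a \<xi>) = lmul (Dcorr m n \<Sigma>) (Bstar a) (Dflip m n \<Sigma> \<xi>)"
proof -
  have "Dflip m n \<Sigma> (lmul (Dcorr m n \<Sigma>) a \<xi>) (f, x) \<mu> h
          = lmul (Dcorr m n \<Sigma>) (Bstar a) (Dflip m n \<Sigma> \<xi>) (f, x) \<mu> h" for f x \<mu> h
  proof (cases "\<mu> \<in> Dind \<Sigma> f x")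
    case True
    let ?N = "idx m n x" and ?S = "\<Sigma> x"
    let ?\<sigma> = "rep_neg ?N ?S \<mu>" and ?\<tau> = "rep_neg_quot ?N ?S \<mu>"
    let ?g = "alpha m n (bar f)"
    define F where "F k = cnj (a f k) *
      Dflip m n \<Sigma> \<xi> (f, x) (gact ?N ?S (?g k) \<mu>) (cocyc ?N ?S (?g k) \<mu> + h)" for k
    have "\<mu> \<in> ?S"
      using True Dind_subset by blast
    have negation: "bij_betw uminus UNIV (UNIV :: int set)"
      by (rule bij_betw_byWitness[where f' = uminus]) auto
    have "Dflip m n \<Sigma> (lmul (Dcorr m n \<Sigma>) a \<xi>) (f, x) \<mu> h
            = cnj (\<Sum>\<^sub>\<infinity>k\<in>UNIV. a f (- k) *
                 \<xi> (f, x) (gact ?N ?S (?g k) ?\<sigma>) (cocyc ?N ?S (?g k) ?\<sigma> + (- ?\<tau> - h)))"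
      using True rep_neg_Dind[where \<Sigma> = \<Sigma>, OF tr True]
      by (simp add: Dflip_def Dcorr_def cnj_reflect_def)
    also have "\<dots> = (\<Sum>\<^sub>\<infinity>k\<in>UNIV. F (- k))"
      unfolding F_def alpha_def
      by (simp flip: infsum_cnj add: Dflip_gact[OF tr nz \<xi> \<open>\<mu> \<in> ?S\<close>, unfolded alpha_def])
    also have "\<dots> = (\<Sum>\<^sub>\<infinity>k\<in>UNIV. F k)"
      by (rule infsum_reindex_bij_betw[OF negation])
    also have "\<dots> = lmul (Dcorr m n \<Sigma>) (Bstar a) (Dflip m n \<Sigma> \<xi>) (f, x) \<mu> h"
      using True by (simp add: F_def Dcorr_def Bstar_def zstar_def)
    finally show ?thesis .
  qed (simp add: Dflip_def Dcorr_def)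
  then show ?thesis
    by (simp add: fun_eq_iff split_paired_All)
qed

theorem lemma7p1:
  fixes m n :: int and \<Sigma> :: "edge \<Rightarrow> int set"
  assumes "m \<noteq> 0" and "n \<noteq> 0"
    and "transversal n (\<Sigma> E)" and "transversal m (\<Sigma> Ebar)"
  shows "corr_iso (Dcorr m n \<Sigma>) (conj_op (Dcorr m n \<Sigma>))"
proof -
  have tr: "transversal (idx m n x) (\<Sigma> x)" for x
    using assms by (cases x) auto
  have nz: "idx m n x \<noteq> 0" for x
    using assms by (cases x) auto
  have "bij_betw (Dflip m n \<Sigma>) (Dcar \<Sigma>) (Dcar \<Sigma>)"
    by (rule bij_betw_byWitness[where f' = "Dflip m n \<Sigma>"])
       (auto simp: Dflip_Dflip[OF tr] Dflip_in_Dcar[OF tr])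
  then show ?thesis
    unfolding corr_iso_def
    by (intro exI[of _ "Dflip m n \<Sigma>"])
       (simp add: conj_op_def Dflip_vadd Dflip_vsmult Dflip_rmul Dflip_lmul[OF tr nz] Dflip_ip[OF tr])
qed

end
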